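(* Let $n\ge4$ and let $\mathcal{L}=\{\ell_1,\ldots,\ell_n\}$ be the set of lines of the matroid $L_n$. A partition $\mathcal{Q}=\{Q_1,\ldots,Q_k\}$ of $\mathcal{L}$ is nice if and only if $|Q_i|\notin\{2,3,n-1\}$ for every $i\in[k]$.
   Context: $L_n$ ($n\ge4$) is the rank-three paving matroid on the set of 2-element subsets of $[n]$ (the pairwise intersection points of $n$ general lines in $\mathbb{P}^2$) whose lines (dependent hyperplanes) are $\ell_i=\{\{i,j\}:j\ne i\}$, $i\in[n]$; circuits are 3-subsets of some $\ell_i$ and 4-subsets containing no such 3-subset. For a set $Q$ of at least two lines, $L_n^Q$ is the rank-three paving matroid on $\bigcup_{\ell\in Q}\ell$ whose set of lines is exactly $Q$. Circuit variety of a matroid $N$ on $E$: tuples $(\gamma_e)$ in $\mathbb{C}^3$ with $(\gamma_e)_{e\in S}$ linearly dependent for every dependent $S$. $N$ is liftable if for every tuple $(\gamma_e)$ in $\mathbb{C}^3$ spanning a plane $H$ and every $q\notin H$ there exist scalars $z_e$ with $(\gamma_e+z_eq)$ in the circuit variety of $N$ and not all in a common plane. A partition $\mathcal{Q}$ of $\mathcal{L}$ is nice if (i) $L_n^{Q_i}$ is not liftable for every $i$ with $|Q_i|\ge2$, and (ii) there is no $i$ and line $\ell\notin Q_i$ with $\ell\subseteq\bigcup_{\ell'\in Q_i}\ell'$. *)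

theory Defs
  imports "HOL-Analysis.Analysis" "HOL-Library.Disjoint_Sets"
begin

type_synonym cvec = "complex ^ 3"

definition Lline :: "nat \<Rightarrow> nat \<Rightarrow> nat set set" where
  "Lline n i = {{i, j} | j. j \<in> {1..n} \<and> j \<noteq> i}"

definition Llines :: "nat \<Rightarrow> nat set set set" where
  "Llines n = Lline n ` {1..n}"

definition paving3_circuits :: "'a set \<Rightarrow> 'a set set \<Rightarrow> 'a set set" where
  "paving3_circuits E Ls =
     {C. C \<subseteq> E \<and>
        ((card C = 3 \<and> (\<exists>l\<in>Ls. C \<subseteq> l)) \<or>
         (card C = 4 \<and> \<not> (\<exists>D. D \<subseteq> C \<and> card D = 3 \<and> (\<exists>l\<in>Ls. D \<subseteq> l))))}"

definition paving3_dependent :: "'a set \<Rightarrow> 'a set set \<Rightarrow> 'a set \<Rightarrow> bool" where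
  "paving3_dependent E Ls S \<longleftrightarrow> S \<subseteq> E \<and> (\<exists>C\<in>paving3_circuits E Ls. C \<subseteq> S)"

definition lin_dep_family :: "('a \<Rightarrow> cvec) \<Rightarrow> 'a set \<Rightarrow> bool" where
  "lin_dep_family \<gamma> S \<longleftrightarrow>
     (\<exists>c :: 'a \<Rightarrow> complex. (\<exists>e\<in>S. c e \<noteq> 0) \<and> (\<Sum>e\<in>S. c e *s \<gamma> e) = 0)"

definition circuit_variety :: "'a set \<Rightarrow> ('a set \<Rightarrow> bool) \<Rightarrow> ('a \<Rightarrow> cvec) set" where
  "circuit_variety E dep = {\<gamma>. \<forall>S. S \<subseteq> E \<longrightarrow> dep S \<longrightarrow> lin_dep_family \<gamma> S}"

definition is_plane :: "cvec set \<Rightarrow> bool" where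
  "is_plane H \<longleftrightarrow> vec.subspace H \<and> vec.dim H = 2"

definition liftable :: "'a set \<Rightarrow> ('a set \<Rightarrow> bool) \<Rightarrow> bool" where
  "liftable E dep \<longleftrightarrow>
     (\<forall>(\<gamma> :: 'a \<Rightarrow> cvec) H q.
        is_plane H \<longrightarrow> vec.span (\<gamma> ` E) = H \<longrightarrow> q \<notin> H \<longrightarrow>
        (\<exists>z :: 'a \<Rightarrow> complex.
            (\<lambda>e. \<gamma> e + z e *s q) \<in> circuit_variety E dep \<and>
            \<not> (\<exists>H'. is_plane H' \<and> (\<lambda>e. \<gamma> e + z e *s q) ` E \<subseteq> H')))"

definition LnQ_ground :: "nat set set set \<Rightarrow> nat set set" where
  "LnQ_ground Q = \<Union>Q"

definition LnQ_dependent :: "nat set set set \<Rightarrow> nat set set \<Rightarrow> bool" where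
  "LnQ_dependent Q = paving3_dependent (\<Union>Q) Q"

definition nice :: "nat \<Rightarrow> nat set set set set \<Rightarrow> bool" where
  "nice n \<Q> \<longleftrightarrow>
     (\<forall>Q\<in>\<Q>. card Q \<ge> 2 \<longrightarrow> \<not> liftable (LnQ_ground Q) (LnQ_dependent Q)) \<and>
     \<not> (\<exists>Q\<in>\<Q>. \<exists>l\<in>Llines n. l \<notin> Q \<and> l \<subseteq> \<Union>Q)"

end

theory Submission
  imports Defs
begin

text \<open>
  Condition (ii) fails for a block \<open>Q\<close> exactly when \<open>Q\<close> consists of \<open>n - 1\<close> lines: the missing
  line \<open>m\<close> meets every line \<open>i\<close> in the point \<open>{i, m}\<close>, so it is covered by \<open>Q\<close> iff all other
  lines belong to \<open>Q\<close>.

  A lift of \<open>\<gamma>\<close> in direction \<open>q\<close> is obtained by shearing: on each line \<open>l\<close> the points \<open>\<gamma> e\<close>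
  are replaced by \<open>\<gamma> e + g\<^sub>l (\<gamma> e)\<close>, where the \<open>g\<^sub>l\<close> are linear maps into \<open>span {q}\<close> that agree
  at common points. Every line then stays in a plane, so the lift lies in the circuit variety
  (any four vectors of \<open>\<complex>\<^sup>3\<close> are dependent), and it is not planar as soon as \<open>q\<close> lies in the
  span of the lifted points. For two lines, and for three lines forming a triangle, each line
  carrying two points that lie on no other line, such a lift always exists; the case analysis
  is on whether the points a line shares with the other lines, or the three vertices of the
  triangle, span the plane of \<open>\<gamma>\<close>. When a whole line is collinear, one of its free points is
  moved by \<open>q\<close> instead.

  With four or more lines take \<open>\<gamma> e = (x e, 1, 0)\<close>. For a lift \<open>(x e, 1, z e)\<close> in the circuit
  variety the points \<open>(x e, z e)\<close> are collinear along every line. For suitable abscissae \<open>x\<close>,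
  the collinearity conditions on four of the lines, which meet pairwise in six points, force \<open>z\<close>
  to be an affine function of \<open>x\<close> there, and every other line meets two of these four in points
  of different abscissae, which propagates the affine relation to all its points. So the lift
  is planar.
\<close>

section \<open>Linear dependence and circuit varieties\<close>

lemma lin_dep_family_mono:
  assumes "finite T" "S \<subseteq> T" "lin_dep_family g S"
  shows "lin_dep_family g T"
proof -
  from assms(3) obtain c where c: "\<exists>e\<in>S. c e \<noteq> 0" "(\<Sum>e\<in>S. c e *s g e) = 0"
    unfolding lin_dep_family_def by blast
  define d where "d e = (if e \<in> S then c e else 0)" for e
  have "(\<Sum>e\<in>T. d e *s g e) = (\<Sum>e\<in>S. d e *s g e)"
    by (rule sum.mono_neutral_right[OF assms(1,2)]) (auto simp: d_def)
  also have "\<dots> = (\<Sum>e\<in>S. c e *s g e)"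
    by (rule sum.cong) (auto simp: d_def)
  finally show ?thesis
    using c assms(2) unfolding lin_dep_family_def by (intro exI[of _ d]) (auto simp: d_def)
qed

lemma lin_dep_family_if_dim_less_card:
  fixes g :: "'a \<Rightarrow> cvec"
  assumes fin: "finite S" and dim: "vec.dim (g ` S) < card S"
  shows "lin_dep_family g S"
proof (cases "inj_on g S")
  case True
  have "vec.dependent (g ` S)"
    using vec.independent_card_le_dim[of "g ` S" "g ` S"] dim card_image[OF True] by auto
  then obtain u where u: "\<exists>v\<in>g ` S. u v \<noteq> 0" "(\<Sum>v\<in>g ` S. u v *s v) = 0"
    using vec.dependent_finite[of "g ` S"] fin by auto
  have "(\<Sum>e\<in>S. u (g e) *s g e) = 0"
    using u(2) sum.reindex[OF True, of "\<lambda>v. u v *s v"] by simp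
  then show ?thesis
    using u(1) unfolding lin_dep_family_def by (intro exI[of _ "u \<circ> g"]) auto
next
  case False
  then obtain e1 e2 where e: "e1 \<in> S" "e2 \<in> S" "e1 \<noteq> e2" "g e1 = g e2"
    unfolding inj_on_def by blast
  define c where "c e = (if e = e1 then 1 else if e = e2 then -1 else (0::complex))" for e
  have "(\<Sum>e\<in>S. c e *s g e) = (\<Sum>e\<in>{e1, e2}. c e *s g e)"
    by (rule sum.mono_neutral_right[OF fin]) (use e in \<open>auto simp: c_def\<close>)
  also have "\<dots> = 0"
    using e by (simp add: c_def)
  finally show ?thesis
    unfolding lin_dep_family_def using e by (intro exI[of _ c]) (auto simp: c_def)
qed

lemma dim_cvec_le_3: "vec.dim (V :: cvec set) \<le> 3"
  using dim_subset_UNIV_cart_gen[of V] by simp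

lemma circuit_variety_paving3I:
  fixes g :: "'a \<Rightarrow> cvec"
  assumes fin: "finite E" and lines: "\<forall>l\<in>Ls. vec.dim (g ` l) \<le> 2"
  shows "g \<in> circuit_variety E (paving3_dependent E Ls)"
  unfolding circuit_variety_def
proof (intro CollectI allI impI)
  fix S assume "S \<subseteq> E" and "paving3_dependent E Ls S"
  then obtain C where C: "C \<in> paving3_circuits E Ls" "C \<subseteq> S" and "finite S"
    unfolding paving3_dependent_def using fin finite_subset by blast
  then have "finite C"
    using finite_subset by blast
  from C(1) have "(card C = 3 \<and> (\<exists>l\<in>Ls. C \<subseteq> l)) \<or> card C = 4"
    unfolding paving3_circuits_def by blast
  then have "vec.dim (g ` C) < card C"
  proof
    assume "card C = 3 \<and> (\<exists>l\<in>Ls. C \<subseteq> l)"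
    then obtain l where "card C = 3" "l \<in> Ls" "g ` C \<subseteq> g ` l"
      by blast
    then show ?thesis
      using vec.dim_subset[of "g ` C" "g ` l"] lines by fastforce
  qed (use dim_cvec_le_3[of "g ` C"] in simp)
  then show "lin_dep_family g S"
    using lin_dep_family_if_dim_less_card lin_dep_family_mono \<open>finite C\<close> \<open>finite S\<close> C(2)
    by blast
qed

lemma circuit_variety_paving3_triple:
  assumes "g \<in> circuit_variety E (paving3_dependent E Ls)"
    and "l \<in> Ls" "l \<subseteq> E" "C \<subseteq> l" "card C = 3"
  shows "lin_dep_family g C"
proof -
  have "C \<in> paving3_circuits E Ls"
    unfolding paving3_circuits_def using assms(2-5) by blast
  then have "paving3_dependent E Ls C"
    unfolding paving3_dependent_def using assms(3,4) by blast
  then show ?thesis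
    using assms(1,3,4) unfolding circuit_variety_def by blast
qed

section \<open>Lifting planar configurations\<close>

lemma dim_insert_plane:
  assumes "is_plane H" "q \<notin> H"
  shows "vec.dim (insert q H) = 3"
proof -
  have "q \<notin> vec.span H"
    using assms vec.span_eq_iff unfolding is_plane_def by blast
  then show ?thesis
    using assms(1) unfolding is_plane_def by (simp add: vec.dim_insert)
qed

lemma dim_image_add_linear_le:
  assumes "Vector_Spaces.linear (*s) (*s) g"
  shows "vec.dim ((\<lambda>x. x + g x) ` V) \<le> vec.dim (V :: cvec set)"
proof -
  have "Vector_Spaces.linear (*s) (*s) (\<lambda>x. x + g x)"
    using vec.linear_compose_add[OF vec.linear_id assms] by (simp add: id_def)
  then show ?thesis
    by (rule vec.dim_image_le)
qed

lemma in_span_singleton_if_dim_le_1: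
  assumes "vec.dim (Y :: cvec set) \<le> 1"
  obtains m where "Y \<subseteq> vec.span {m}"
proof -
  obtain B where B: "B \<subseteq> Y" "vec.independent B" "Y \<subseteq> vec.span B" "card B = vec.dim Y"
    by (rule vec.basis_exists)
  have "finite B" "card B \<le> 1"
    using B(2,4) assms vec.finiteI_independent by auto
  then have "\<forall>a\<in>B. \<forall>b\<in>B. a = b"
    using card_le_Suc0_iff_eq[of B] by simp
  then obtain m where "B \<subseteq> {m}"
    by blast
  then have "vec.span B \<subseteq> vec.span {m}"
    by (rule vec.span_mono)
  with B(3) show ?thesis
    using that by blast
qed

lemma linear_onto_line_vanishing_on_span:
  fixes x q :: cvec
  assumes "x \<notin> vec.span Y"
  obtains g where "Vector_Spaces.linear (*s) (*s) g" "\<And>y. y \<in> vec.span Y \<Longrightarrow> g y = 0"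
    "g x = q" "\<And>v. g v \<in> vec.span {q}"
proof -
  obtain B where B: "B \<subseteq> Y" "vec.independent B" "Y \<subseteq> vec.span B"
    by (rule vec.basis_exists)
  have span_B: "vec.span B = vec.span Y"
    using B vec.span_mono vec.span_minimal[OF B(3) vec.subspace_span] by blast
  then have "x \<notin> B" "x \<notin> vec.span B"
    using assms vec.span_base by auto
  then have "vec.independent (insert x B)"
    using B(2) by (simp add: vec.independent_insert)
  then obtain g where g: "Vector_Spaces.linear (*s) (*s) g"
      "\<forall>v\<in>insert x B. g v = (if v = x then q else 0)"
      "range g = vec.span ((\<lambda>v. if v = x then q else 0) ` insert x B)"
    using vec.linear_independent_extend_subspace[of "insert x B" "\<lambda>v. if v = x then q else 0"]
    by blast
  have "range g \<subseteq> vec.span {q}"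
    unfolding g(3) by (rule vec.span_minimal) (auto simp: vec.span_base vec.span_zero)
  moreover have "g y = 0" if "y \<in> vec.span Y" for y
  proof (rule vec.linear_eq_0_on_span[OF g(1)])
    show "y \<in> vec.span B"
      using that span_B by simp
    show "\<And>v. v \<in> B \<Longrightarrow> g v = 0"
      using g(2) \<open>x \<notin> B\<close> by auto
  qed
  ultimately show ?thesis
    using that[of g] g(1,2) by auto
qed

lemma dim_insert_collinear_le_2:
  assumes "X \<subseteq> vec.span {m}"
  shows "vec.dim (insert v X) \<le> 2"
proof -
  have "vec.span {m} \<subseteq> vec.span {m, v}"
    by (rule vec.span_mono) auto
  then have "insert v X \<subseteq> vec.span {m, v}"
    using assms by (simp add: vec.span_base order_trans[OF assms])
  then have "vec.dim (insert v X) \<le> card {m, v}"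
    by (rule vec.dim_le_card) auto
  also have "\<dots> \<le> 2"
    by (simp add: card_insert_le_m1)
  finally show ?thesis .
qed

lemma obtain_two_elements:
  assumes "2 \<le> card A"
  obtains x y where "x \<in> A" "y \<in> A" "x \<noteq> y"
proof -
  have "finite A" "\<not> card A \<le> Suc 0"
    using assms card.infinite by fastforce+
  then show ?thesis
    using card_le_Suc0_iff_eq that by blast
qed

lemma eq_at_pairwise_meets:
  assumes meets: "la \<inter> lb = {pab}" "la \<inter> lc = {pac}" "lb \<inter> lc = {pbc}"
    and agree: "F la pab = F lb pab" "F la pac = F lc pac" "F lb pbc = F lc pbc"
    and "l \<in> {la, lb, lc}" "l' \<in> {la, lb, lc}" "e \<in> l" "e \<in> l'"
  shows "F l e = F l' e"
proof -
  have "e \<in> la \<inter> lb \<Longrightarrow> e = pab" "e \<in> la \<inter> lc \<Longrightarrow> e = pac" "e \<in> lb \<inter> lc \<Longrightarrow> e = pbc"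
    using meets by blast+
  then show ?thesis
    using assms(7-10) agree by auto
qed

definition nonplanar_lift :: "'a set set \<Rightarrow> ('a \<Rightarrow> cvec) \<Rightarrow> cvec \<Rightarrow> bool" where
  "nonplanar_lift Ls \<gamma> q \<longleftrightarrow>
     (\<exists>z. (\<lambda>e. \<gamma> e + z e *s q) \<in> circuit_variety (\<Union>Ls) (paving3_dependent (\<Union>Ls) Ls) \<and>
          \<not> (\<exists>H'. is_plane H' \<and> (\<lambda>e. \<gamma> e + z e *s q) ` \<Union>Ls \<subseteq> H'))"

definition free_points :: "'a set set \<Rightarrow> 'a set \<Rightarrow> 'a set" where
  "free_points Ls l = l - \<Union>(Ls - {l})"

locale lifting_problem =
  fixes Ls :: "'a set set" and \<gamma> :: "'a \<Rightarrow> cvec" and H :: "cvec set" and q :: cvec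
  assumes finite_points: "finite (\<Union>Ls)"
    and plane_H: "is_plane H"
    and span_points: "vec.span (\<gamma> ` \<Union>Ls) = H"
    and q_notin_H: "q \<notin> H"
begin

lemma point_in_H: "e \<in> \<Union>Ls \<Longrightarrow> \<gamma> e \<in> H"
  using span_points vec.span_base[of "\<gamma> e" "\<gamma> ` \<Union>Ls"] by auto

lemma subspace_H: "vec.subspace H"
  and dim_H: "vec.dim H = 2"
  using plane_H unfolding is_plane_def by simp_all

lemma dim_le_2_if_subset_H: "X \<subseteq> H \<Longrightarrow> vec.dim X \<le> 2"
  using vec.dim_subset[of X H] dim_H by simp

lemma lifted_points_not_planar:
  assumes moved: "\<forall>e\<in>\<Union>Ls. L e - \<gamma> e \<in> vec.span {q}"
    and q_in: "q \<in> vec.span (L ` \<Union>Ls)"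
    and "is_plane H'"
  shows "\<not> L ` \<Union>Ls \<subseteq> H'"
proof
  assume "L ` \<Union>Ls \<subseteq> H'"
  with \<open>is_plane H'\<close> have span_in_H': "vec.span (L ` \<Union>Ls) \<subseteq> H'"
    unfolding is_plane_def by (simp add: vec.span_minimal)
  have q_span: "vec.span {q} \<subseteq> vec.span (L ` \<Union>Ls)"
    using q_in vec.span_minimal[of "{q}" "vec.span (L ` \<Union>Ls)"] by simp
  have "\<gamma> e \<in> vec.span (L ` \<Union>Ls)" if "e \<in> \<Union>Ls" for e
  proof -
    have "L e \<in> vec.span (L ` \<Union>Ls)"
      using that by (intro vec.span_base) auto
    moreover have "L e - \<gamma> e \<in> vec.span (L ` \<Union>Ls)"
      using that moved q_span by auto
    ultimately have "L e - (L e - \<gamma> e) \<in> vec.span (L ` \<Union>Ls)"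
      by (rule vec.span_diff)
    then show ?thesis
      by simp
  qed
  then have "H \<subseteq> vec.span (L ` \<Union>Ls)"
    using vec.span_minimal[of "\<gamma> ` \<Union>Ls" "vec.span (L ` \<Union>Ls)"] span_points by auto
  then have "insert q H \<subseteq> H'"
    using span_in_H' q_in by auto
  then have "vec.dim (insert q H) \<le> vec.dim H'"
    by (rule vec.dim_subset)
  then show False
    using dim_insert_plane[OF plane_H q_notin_H] \<open>is_plane H'\<close> unfolding is_plane_def by simp
qed

lemma nonplanar_liftI:
  assumes moved: "\<forall>e\<in>\<Union>Ls. L e - \<gamma> e \<in> vec.span {q}"
    and lines: "\<forall>l\<in>Ls. vec.dim (L ` l) \<le> 2"
    and q_in: "q \<in> vec.span (L ` \<Union>Ls)"
  shows "nonplanar_lift Ls \<gamma> q"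
proof -
  define z where "z e = (SOME k. L e - \<gamma> e = k *s q)" for e
  have "\<gamma> e + z e *s q = L e" if "e \<in> \<Union>Ls" for e
  proof -
    have "\<exists>k. L e - \<gamma> e = k *s q"
      using moved that by (auto simp: vec.span_singleton)
    then have "L e - \<gamma> e = z e *s q"
      unfolding z_def by (rule someI_ex)
    then show ?thesis
      by (simp add: algebra_simps)
  qed
  then have image_eq: "(\<lambda>e. \<gamma> e + z e *s q) ` l = L ` l" if "l \<subseteq> \<Union>Ls" for l
    using that by (intro image_cong refl) blast
  have variety: "(\<lambda>e. \<gamma> e + z e *s q) \<in> circuit_variety (\<Union>Ls) (paving3_dependent (\<Union>Ls) Ls)"
    using lines image_eq[OF Union_upper] by (intro circuit_variety_paving3I[OF finite_points]) simp
  have not_planar: "\<not> (\<exists>H'. is_plane H' \<and> (\<lambda>e. \<gamma> e + z e *s q) ` \<Union>Ls \<subseteq> H')"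
    using lifted_points_not_planar[OF moved q_in] image_eq[OF order_refl] by simp
  show ?thesis
    unfolding nonplanar_lift_def by (intro exI[of _ z] conjI variety not_planar)
qed

lemma nonplanar_lift_by_shears:
  assumes linear: "\<And>l. l \<in> Ls \<Longrightarrow> Vector_Spaces.linear (*s) (*s) (g l)"
    and onto_q: "\<And>l x. l \<in> Ls \<Longrightarrow> g l x \<in> vec.span {q}"
    and compatible: "\<And>l l' e. l \<in> Ls \<Longrightarrow> l' \<in> Ls \<Longrightarrow> e \<in> l \<Longrightarrow> e \<in> l' \<Longrightarrow> g l (\<gamma> e) = g l' (\<gamma> e)"
    and moved: "lf \<in> Ls" "f \<in> lf" "g lf (\<gamma> f) = q"
    and unmoved: "\<gamma> f \<in> vec.span (\<Union>l\<in>Ls. (\<lambda>e. \<gamma> e + g l (\<gamma> e)) ` l)"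
  shows "nonplanar_lift Ls \<gamma> q"
proof -
  define L where "L e = \<gamma> e + g (SOME l. l \<in> Ls \<and> e \<in> l) (\<gamma> e)" for e
  have L_line: "L e = \<gamma> e + g l (\<gamma> e)" if "l \<in> Ls" "e \<in> l" for l e
  proof -
    have "(SOME l. l \<in> Ls \<and> e \<in> l) \<in> Ls \<and> e \<in> (SOME l. l \<in> Ls \<and> e \<in> l)"
      using someI[of "\<lambda>l. l \<in> Ls \<and> e \<in> l" l] that by blast
    then show ?thesis
      unfolding L_def using compatible[OF _ that(1) _ that(2)] by simp
  qed
  have "L ` \<Union>Ls = (\<Union>l\<in>Ls. L ` l)"
    by (rule image_Union)
  also have "\<dots> = (\<Union>l\<in>Ls. (\<lambda>e. \<gamma> e + g l (\<gamma> e)) ` l)"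
    using L_line by (intro SUP_cong refl image_cong) auto
  finally have lifted: "L ` \<Union>Ls = (\<Union>l\<in>Ls. (\<lambda>e. \<gamma> e + g l (\<gamma> e)) ` l)" .
  show ?thesis
  proof (rule nonplanar_liftI)
    show "\<forall>e\<in>\<Union>Ls. L e - \<gamma> e \<in> vec.span {q}"
      using onto_q L_line by auto
    show "\<forall>l\<in>Ls. vec.dim (L ` l) \<le> 2"
    proof
      fix l assume "l \<in> Ls"
      then have "L ` l = (\<lambda>x. x + g l x) ` \<gamma> ` l" "\<gamma> ` l \<subseteq> H"
        using L_line point_in_H by (auto simp: image_image)
      then show "vec.dim (L ` l) \<le> 2"
        using dim_image_add_linear_le[OF linear[OF \<open>l \<in> Ls\<close>], of "\<gamma> ` l"]
          dim_le_2_if_subset_H[of "\<gamma> ` l"] by simp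
    qed
    have "\<gamma> f + q \<in> vec.span (L ` \<Union>Ls)"
      using moved L_line[OF moved(1,2)] by (intro vec.span_base) force
    moreover have "\<gamma> f \<in> vec.span (L ` \<Union>Ls)"
      using unmoved lifted by simp
    ultimately have "(\<gamma> f + q) - \<gamma> f \<in> vec.span (L ` \<Union>Ls)"
      by (rule vec.span_diff)
    then show "q \<in> vec.span (L ` \<Union>Ls)"
      by simp
  qed
qed

lemma nonplanar_lift_move_free_point:
  assumes l: "l \<in> Ls" "f \<in> free_points Ls l"
    and collinear: "\<gamma> ` (l - {f}) \<subseteq> vec.span {m}"
    and dependent: "\<gamma> f \<in> vec.span (\<gamma> ` (\<Union>Ls - {f}))"
  shows "nonplanar_lift Ls \<gamma> q"
proof -
  define L where "L e = (if e = f then \<gamma> e + q else \<gamma> e)" for e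
  show ?thesis
  proof (rule nonplanar_liftI)
    show "\<forall>e\<in>\<Union>Ls. L e - \<gamma> e \<in> vec.span {q}"
      by (auto simp: L_def vec.span_base vec.span_zero)
    show "\<forall>l'\<in>Ls. vec.dim (L ` l') \<le> 2"
    proof
      fix l' assume "l' \<in> Ls"
      show "vec.dim (L ` l') \<le> 2"
      proof (cases "l' = l")
        case True
        then have "L ` l' \<subseteq> insert (\<gamma> f + q) (\<gamma> ` (l - {f}))"
          by (auto simp: L_def)
        then show ?thesis
          using dim_insert_collinear_le_2[OF collinear] vec.dim_subset order_trans by blast
      next
        case False
        then have "f \<notin> l'"
          using l \<open>l' \<in> Ls\<close> by (auto simp: free_points_def)
        then show ?thesis
          using point_in_H \<open>l' \<in> Ls\<close> by (intro dim_le_2_if_subset_H) (auto simp: L_def)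
      qed
    qed
    have "\<gamma> ` (\<Union>Ls - {f}) \<subseteq> L ` \<Union>Ls"
      by (force simp: L_def)
    then have "vec.span (\<gamma> ` (\<Union>Ls - {f})) \<subseteq> vec.span (L ` \<Union>Ls)"
      by (rule vec.span_mono)
    with dependent have "\<gamma> f \<in> vec.span (L ` \<Union>Ls)"
      by blast
    moreover have "L f \<in> vec.span (L ` \<Union>Ls)"
      using l by (intro vec.span_base) (auto simp: free_points_def)
    ultimately show "q \<in> vec.span (L ` \<Union>Ls)"
      using vec.span_diff[of "L f" _ "\<gamma> f"] by (simp add: L_def)
  qed
qed

lemma nonplanar_lift_collinear_line:
  assumes l: "l \<in> Ls" "2 \<le> card (free_points Ls l)"
    and collinear: "\<gamma> ` l \<subseteq> vec.span {m}"
  shows "nonplanar_lift Ls \<gamma> q"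
proof -
  obtain f1 f2 where f: "f1 \<in> free_points Ls l" "f2 \<in> free_points Ls l" "f1 \<noteq> f2"
    using obtain_two_elements[OF l(2)] by blast
  then have "f1 \<in> l" "f2 \<in> l" "f1 \<in> \<Union>Ls" "f2 \<in> \<Union>Ls"
    using l(1) by (auto simp: free_points_def)
  then have "\<gamma> f1 \<in> range (\<lambda>k. k *s m)" "\<gamma> f2 \<in> range (\<lambda>k. k *s m)"
    using collinear by (auto simp: vec.span_singleton)
  then obtain k1 k2 where k: "\<gamma> f1 = k1 *s m" "\<gamma> f2 = k2 *s m"
    by blast
  show ?thesis
  proof (cases "k2 = 0")
    case True
    then have "\<gamma> f2 \<in> vec.span (\<gamma> ` (\<Union>Ls - {f2}))"
      using k by (simp add: vec.span_zero)
    then show ?thesis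
      using collinear f l(1) by (intro nonplanar_lift_move_free_point[of l f2 m]) auto
  next
    case False
    then have "\<gamma> f1 = (k1 / k2) *s \<gamma> f2"
      using k by simp
    moreover have "\<gamma> f2 \<in> vec.span (\<gamma> ` (\<Union>Ls - {f1}))"
      using \<open>f2 \<in> \<Union>Ls\<close> f(3) by (intro vec.span_base) auto
    ultimately have "\<gamma> f1 \<in> vec.span (\<gamma> ` (\<Union>Ls - {f1}))"
      by (simp add: vec.span_scale)
    then show ?thesis
      using collinear f l(1) by (intro nonplanar_lift_move_free_point[of l f1 m]) auto
  qed
qed

lemma collinear_if_not_spanning:
  assumes "S \<subseteq> \<Union>Ls" "vec.span (\<gamma> ` S) \<noteq> H"
  obtains m where "\<gamma> ` S \<subseteq> vec.span {m}"
proof -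
  have "\<gamma> ` S \<subseteq> H"
    using assms(1) point_in_H by auto
  then have "vec.span (\<gamma> ` S) \<subseteq> H"
    using subspace_H by (simp add: vec.span_minimal)
  moreover have "vec.span H = H"
    using subspace_H by (simp add: vec.span_eq_iff)
  ultimately have "vec.span (\<gamma> ` S) \<subset> vec.span H"
    using assms(2) by (metis psubsetI)
  then have "vec.dim (\<gamma> ` S) \<le> 1"
    using vec.dim_psubset[of "\<gamma> ` S" H] dim_H by simp
  then show ?thesis
    using in_span_singleton_if_dim_le_1 that by blast
qed

lemma not_in_span_singleton_if_spans_H:
  assumes "vec.span {u, v} = H"
  shows "u \<notin> vec.span {v}"
proof
  assume "u \<in> vec.span {v}"
  then have "vec.span {u, v} \<subseteq> vec.span {v}"
    by (simp add: vec.span_minimal vec.span_base)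
  then have "vec.dim H \<le> vec.dim {v}"
    using assms vec.dim_subset vec.dim_span by metis
  also have "\<dots> \<le> 1"
    using vec.dim_le_card'[of "{v}"] by simp
  finally show False
    using dim_H by simp
qed

lemma nonplanar_lift_shear_line:
  assumes l: "l \<in> Ls" "f \<in> free_points Ls l"
    and independent: "\<gamma> f \<notin> vec.span (\<gamma> ` (l - free_points Ls l))"
    and dependent: "\<gamma> f \<in> vec.span (\<gamma> ` (\<Union>Ls - free_points Ls l))"
  shows "nonplanar_lift Ls \<gamma> q"
proof -
  obtain g where g: "Vector_Spaces.linear (*s) (*s) g"
      "\<And>y. y \<in> vec.span (\<gamma> ` (l - free_points Ls l)) \<Longrightarrow> g y = 0"
      "g (\<gamma> f) = q" "\<And>v. g v \<in> vec.span {q}"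
    using linear_onto_line_vanishing_on_span[OF independent] by blast
  define G where "G l' = (if l' = l then g else (\<lambda>_. 0))" for l'
  have G_fixes: "G l' (\<gamma> e) = 0" if "e \<in> l'" "e \<notin> free_points Ls l" for l' e
  proof (cases "l' = l")
    case True
    then have "\<gamma> e \<in> vec.span (\<gamma> ` (l - free_points Ls l))"
      using that by (intro vec.span_base) auto
    then show ?thesis
      using True g(2) by (simp add: G_def)
  qed (simp add: G_def)
  show ?thesis
  proof (rule nonplanar_lift_by_shears[where g = G, OF _ _ _ l(1)])
    show "Vector_Spaces.linear (*s) (*s) (G l')" for l'
      using g(1) by (simp add: G_def vec.linear_zero)
    show "G l' x \<in> vec.span {q}" for l' x
      using g(4) by (simp add: G_def vec.span_zero)
    show "G l1 (\<gamma> e) = G l2 (\<gamma> e)" if "l1 \<in> Ls" "l2 \<in> Ls" "e \<in> l1" "e \<in> l2" for l1 l2 e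
    proof (cases "l1 = l2 \<or> e \<notin> free_points Ls l")
      case False
      then show ?thesis
        using that by (auto simp: free_points_def G_def)
    qed (use that G_fixes in auto)
    show "f \<in> l" "G l (\<gamma> f) = q"
      using l(2) g(3) by (simp_all add: G_def free_points_def)
    have "\<gamma> ` (\<Union>Ls - free_points Ls l) \<subseteq> (\<Union>l'\<in>Ls. (\<lambda>e. \<gamma> e + G l' (\<gamma> e)) ` l')"
    proof
      fix y assume "y \<in> \<gamma> ` (\<Union>Ls - free_points Ls l)"
      then obtain e l' where e: "l' \<in> Ls" "e \<in> l'" "e \<notin> free_points Ls l" "y = \<gamma> e"
        by blast
      then have "y = \<gamma> e + G l' (\<gamma> e)"
        using G_fixes by simp
      then show "y \<in> (\<Union>l'\<in>Ls. (\<lambda>e. \<gamma> e + G l' (\<gamma> e)) ` l')"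
        using e(1,2) by blast
    qed
    then show "\<gamma> f \<in> vec.span (\<Union>l'\<in>Ls. (\<lambda>e. \<gamma> e + G l' (\<gamma> e)) ` l')"
      using dependent vec.span_mono[of "\<gamma> ` (\<Union>Ls - free_points Ls l)"] by (meson subsetD)
  qed
qed

lemma nonplanar_lift_line_collinear_base:
  assumes l: "l \<in> Ls" "2 \<le> card (free_points Ls l)"
    and collinear: "\<gamma> ` (l - free_points Ls l) \<subseteq> vec.span {m}"
    and spanning: "vec.span (\<gamma> ` (\<Union>Ls - free_points Ls l)) = H"
  shows "nonplanar_lift Ls \<gamma> q"
proof (cases "\<gamma> ` free_points Ls l \<subseteq> vec.span (\<gamma> ` (l - free_points Ls l))")
  case True
  have "vec.span (\<gamma> ` (l - free_points Ls l)) \<subseteq> vec.span {m}"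
    using collinear by (simp add: vec.span_minimal)
  then have "\<gamma> ` free_points Ls l \<subseteq> vec.span {m}"
    using True by blast
  with collinear have "\<gamma> ` l \<subseteq> vec.span {m}"
    unfolding free_points_def by blast
  then show ?thesis
    by (rule nonplanar_lift_collinear_line[OF l])
next
  case False
  then obtain f where f: "f \<in> free_points Ls l" "\<gamma> f \<notin> vec.span (\<gamma> ` (l - free_points Ls l))"
    by blast
  moreover have "\<gamma> f \<in> vec.span (\<gamma> ` (\<Union>Ls - free_points Ls l))"
    using point_in_H l(1) f(1) spanning by (auto simp: free_points_def)
  ultimately show ?thesis
    using l(1) nonplanar_lift_shear_line by blast
qed

lemma nonplanar_lift_two_lines:
  assumes l: "l \<in> Ls" "2 \<le> card (free_points Ls l)"
    and l': "l' \<in> Ls" "l' \<noteq> l" "2 \<le> card (free_points Ls l')"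
    and base: "vec.span (\<gamma> ` (l - free_points Ls l)) \<noteq> H"
  shows "nonplanar_lift Ls \<gamma> q"
proof -
  obtain m where m: "\<gamma> ` (l - free_points Ls l) \<subseteq> vec.span {m}"
    using collinear_if_not_spanning[OF _ base] l(1) by blast
  show ?thesis
  proof (cases "vec.span (\<gamma> ` (\<Union>Ls - free_points Ls l)) = H")
    case True
    then show ?thesis
      by (rule nonplanar_lift_line_collinear_base[OF l m])
  next
    case False
    obtain m' where "\<gamma> ` (\<Union>Ls - free_points Ls l) \<subseteq> vec.span {m'}"
      using collinear_if_not_spanning[OF _ False] by blast
    moreover have "l' \<subseteq> \<Union>Ls - free_points Ls l"
      using l' l(1) by (auto simp: free_points_def)
    ultimately have "\<gamma> ` l' \<subseteq> vec.span {m'}"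
      by blast
    then show ?thesis
      using nonplanar_lift_collinear_line l'(1,3) by blast
  qed
qed

lemma nonplanar_lift_triangle:
  assumes Ls: "Ls = {la, lb, lc}"
    and meets: "la \<inter> lb = {pab}" "la \<inter> lc = {pac}" "lb \<inter> lc = {pbc}" "pbc \<notin> la"
    and spans: "vec.span {\<gamma> pab, \<gamma> pac} = H" "vec.span {\<gamma> pab, \<gamma> pbc} = H"
      "vec.span {\<gamma> pac, \<gamma> pbc} = H"
  shows "nonplanar_lift Ls \<gamma> q"
proof -
  obtain ga where ga: "Vector_Spaces.linear (*s) (*s) ga"
      "\<And>y. y \<in> vec.span {\<gamma> pac} \<Longrightarrow> ga y = 0" "ga (\<gamma> pab) = q" "\<And>v. ga v \<in> vec.span {q}"
    using linear_onto_line_vanishing_on_span[OF not_in_span_singleton_if_spans_H[OF spans(1)]]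
    by blast
  obtain gb where gb: "Vector_Spaces.linear (*s) (*s) gb"
      "\<And>y. y \<in> vec.span {\<gamma> pbc} \<Longrightarrow> gb y = 0" "gb (\<gamma> pab) = q" "\<And>v. gb v \<in> vec.span {q}"
    using linear_onto_line_vanishing_on_span[OF not_in_span_singleton_if_spans_H[OF spans(2)]]
    by blast
  have ga_pac: "ga (\<gamma> pac) = 0" and gb_pbc: "gb (\<gamma> pbc) = 0"
    by (simp_all add: ga(2) gb(2) vec.span_base)
  have distinct: "lc \<noteq> la" "lc \<noteq> lb" "lb \<noteq> la"
    using meets by auto
  define G where "G l = (if l = la then ga else if l = lb then gb else (\<lambda>_. 0))" for l
  let ?lifted = "\<Union>l\<in>Ls. (\<lambda>e. \<gamma> e + G l (\<gamma> e)) ` l"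
  show ?thesis
  proof (rule nonplanar_lift_by_shears[where g = G and lf = la and f = pab])
    show "Vector_Spaces.linear (*s) (*s) (G l)" for l
      unfolding G_def using ga(1) gb(1) by (simp add: vec.linear_zero)
    show "G l x \<in> vec.span {q}" for l x
      by (cases "l = la"; cases "l = lb") (simp_all add: G_def ga(4) gb(4) vec.span_zero)
    show "G l (\<gamma> e) = G l' (\<gamma> e)" if "l \<in> Ls" "l' \<in> Ls" "e \<in> l" "e \<in> l'" for l l' e
      by (rule eq_at_pairwise_meets[OF meets(1-3), of "\<lambda>l e. G l (\<gamma> e)"])
        (use that Ls ga(3) gb(3) ga_pac gb_pbc distinct in \<open>simp_all add: G_def\<close>)
    show "la \<in> Ls" "pab \<in> la" "G la (\<gamma> pab) = q"
      using Ls meets(1) ga(3) by (auto simp: G_def)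
    have "\<gamma> pac \<in> (\<lambda>e. \<gamma> e + G lc (\<gamma> e)) ` lc" "\<gamma> pbc \<in> (\<lambda>e. \<gamma> e + G lc (\<gamma> e)) ` lc"
      using meets distinct by (intro image_eqI[of _ _ pac] image_eqI[of _ _ pbc], auto simp: G_def)+
    then have "{\<gamma> pac, \<gamma> pbc} \<subseteq> ?lifted"
      using Ls by blast
    then have "H \<subseteq> vec.span ?lifted"
      unfolding spans(3)[symmetric] by (intro vec.span_mono) blast
    moreover have "\<gamma> pab \<in> H"
      using meets Ls point_in_H by blast
    ultimately show "\<gamma> pab \<in> vec.span ?lifted"
      by blast
  qed
qed

lemma nonplanar_lift_three_lines:
  assumes Ls: "Ls = {la, lb, lc}"
    and meets: "la \<inter> lb = {pab}" "la \<inter> lc = {pac}" "lb \<inter> lc = {pbc}" "pbc \<notin> la"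
    and free: "2 \<le> card (la - (lb \<union> lc))" "2 \<le> card (lb - (la \<union> lc))" "2 \<le> card (lc - (la \<union> lb))"
  shows "nonplanar_lift Ls \<gamma> q"
proof -
  have distinct: "lb \<noteq> la" "lc \<noteq> la" "lc \<noteq> lb"
    using meets by auto
  then have free_points: "free_points Ls la = la - (lb \<union> lc)"
    "free_points Ls lb = lb - (la \<union> lc)" "free_points Ls lc = lc - (la \<union> lb)"
    unfolding Ls by (auto simp: free_points_def)
  have bases: "\<gamma> ` (la - free_points Ls la) = {\<gamma> pab, \<gamma> pac}"
    "\<gamma> ` (lb - free_points Ls lb) = {\<gamma> pab, \<gamma> pbc}"
    "\<gamma> ` (lc - free_points Ls lc) = {\<gamma> pac, \<gamma> pbc}"
    unfolding free_points using meets by auto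
  have lines: "la \<in> Ls" "lb \<in> Ls" "lc \<in> Ls"
    using Ls by simp_all
  consider "vec.span {\<gamma> pab, \<gamma> pac} = H" "vec.span {\<gamma> pab, \<gamma> pbc} = H"
      "vec.span {\<gamma> pac, \<gamma> pbc} = H"
    | "vec.span (\<gamma> ` (la - free_points Ls la)) \<noteq> H"
    | "vec.span (\<gamma> ` (lb - free_points Ls lb)) \<noteq> H"
    | "vec.span (\<gamma> ` (lc - free_points Ls lc)) \<noteq> H"
    unfolding bases by blast
  then show ?thesis
  proof cases
    case 1
    then show ?thesis
      by (rule nonplanar_lift_triangle[OF Ls meets])
  next
    case 2
    then show ?thesis
      using nonplanar_lift_two_lines[of la lb] lines free distinct by (simp add: free_points)
  next
    case 3
    then show ?thesis
      using nonplanar_lift_two_lines[of lb la] lines free distinct by (simp add: free_points)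
  next
    case 4
    then show ?thesis
      using nonplanar_lift_two_lines[of lc la] lines free distinct by (simp add: free_points)
  qed
qed

end

lemma liftable_paving3_iff:
  "liftable (\<Union>Ls) (paving3_dependent (\<Union>Ls) Ls) \<longleftrightarrow>
     (\<forall>\<gamma> H q. is_plane H \<longrightarrow> vec.span (\<gamma> ` \<Union>Ls) = H \<longrightarrow> q \<notin> H \<longrightarrow> nonplanar_lift Ls \<gamma> q)"
  by (simp add: liftable_def nonplanar_lift_def)

lemma liftable_paving3I:
  assumes "finite (\<Union>Ls)" and "\<And>\<gamma> H q. lifting_problem Ls \<gamma> H q \<Longrightarrow> nonplanar_lift Ls \<gamma> q"
  shows "liftable (\<Union>Ls) (paving3_dependent (\<Union>Ls) Ls)"
  using assms unfolding liftable_paving3_iff lifting_problem_def by blast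

lemma liftable_two_lines:
  assumes fin: "finite (la \<union> lb)" and meet: "card (la \<inter> lb) \<le> 1"
    and free: "2 \<le> card (la - lb)" "2 \<le> card (lb - la)"
  shows "liftable (la \<union> lb) (paving3_dependent (la \<union> lb) {la, lb})"
proof -
  have "liftable (\<Union>{la, lb}) (paving3_dependent (\<Union>{la, lb}) {la, lb})"
  proof (rule liftable_paving3I)
    show "finite (\<Union>{la, lb})"
      using fin by simp
    fix \<gamma> H q assume "lifting_problem {la, lb} \<gamma> H q"
    then interpret lifting_problem "{la, lb}" \<gamma> H q .
    have "la \<noteq> lb"
      using free by auto
    then have free_points: "free_points {la, lb} la = la - lb" "free_points {la, lb} lb = lb - la"
      by (auto simp: free_points_def)
    have "vec.dim (\<gamma> ` (la \<inter> lb)) \<le> 1"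
      using vec.dim_le_card'[of "\<gamma> ` (la \<inter> lb)"] card_image_le[of "la \<inter> lb" \<gamma>] fin meet by simp
    then have "vec.span (\<gamma> ` (la \<inter> lb)) \<noteq> H"
      using dim_H vec.dim_span by fastforce
    moreover have "la - free_points {la, lb} la = la \<inter> lb"
      using free_points by blast
    ultimately show "nonplanar_lift {la, lb} \<gamma> q"
      using nonplanar_lift_two_lines[of la lb] free free_points \<open>la \<noteq> lb\<close> by simp
  qed
  then show ?thesis
    by simp
qed

lemma liftable_triangle:
  assumes fin: "finite (la \<union> lb \<union> lc)"
    and meets: "la \<inter> lb = {pab}" "la \<inter> lc = {pac}" "lb \<inter> lc = {pbc}" "pbc \<notin> la"
    and free: "2 \<le> card (la - (lb \<union> lc))" "2 \<le> card (lb - (la \<union> lc))" "2 \<le> card (lc - (la \<union> lb))"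
  shows "liftable (la \<union> lb \<union> lc) (paving3_dependent (la \<union> lb \<union> lc) {la, lb, lc})"
proof -
  have "liftable (\<Union>{la, lb, lc}) (paving3_dependent (\<Union>{la, lb, lc}) {la, lb, lc})"
  proof (rule liftable_paving3I)
    show "finite (\<Union>{la, lb, lc})"
      using fin by (simp add: Un_assoc)
  qed (rule lifting_problem.nonplanar_lift_three_lines[OF _ refl meets free])
  then show ?thesis
    by (simp add: Un_assoc)
qed

section \<open>Lifts that remain planar\<close>

lemma is_plane_graph: "is_plane {v :: cvec. v$3 = \<alpha> * v$1 + \<beta> * v$2}"
proof -
  define u :: cvec where "u = vector [1, 0, \<alpha>]"
  define w :: cvec where "w = vector [0, 1, \<beta>]"
  have "{v :: cvec. v$3 = \<alpha> * v$1 + \<beta> * v$2} = vec.span {u, w}"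
  proof (intro set_eqI iffI)
    fix v :: cvec assume "v \<in> {v. v$3 = \<alpha> * v$1 + \<beta> * v$2}"
    then have "v - v$1 *s u = v$2 *s w"
      by (simp add: vec_eq_iff forall_3 u_def w_def)
    then show "v \<in> vec.span {u, w}"
      unfolding vec.span_insert[of u "{w}"] vec.span_singleton by blast
  next
    fix v assume "v \<in> vec.span {u, w}"
    then obtain k j where "v - k *s u = j *s w"
      unfolding vec.span_insert[of u "{w}"] vec.span_singleton by blast
    then have "v$1 = k" "v$2 = j" "v$3 - k * \<alpha> = j * \<beta>"
      by (simp_all add: vec_eq_iff forall_3 u_def w_def)
    then show "v \<in> {v. v$3 = \<alpha> * v$1 + \<beta> * v$2}"
      by (simp add: algebra_simps)
  qed
  moreover have "vec.dim (vec.span {u, w}) = 2"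
  proof -
    have "u \<notin> vec.span {w}" "w \<noteq> 0"
      by (auto simp: vec.span_singleton u_def w_def vec_eq_iff forall_3)
    then have "vec.independent {u, w}" "u \<noteq> w"
      by (auto simp: vec.independent_insert vec.span_base)
    then show ?thesis
      by (simp add: vec.dim_eq_card_independent)
  qed
  ultimately show ?thesis
    unfolding is_plane_def by simp
qed

lemma span_horizontal_points:
  assumes "e0 \<in> E" "e1 \<in> E" "x e0 = 0" "x e1 = 1"
  shows "vec.span ((\<lambda>e. vector [x e, 1, 0] :: cvec) ` E) = {v. v$3 = 0}"
proof
  have "vec.subspace {v :: cvec. v$3 = 0}"
    using is_plane_graph[of 0 0] unfolding is_plane_def by simp
  then show "vec.span ((\<lambda>e. vector [x e, 1, 0] :: cvec) ` E) \<subseteq> {v. v$3 = 0}"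
    by (intro vec.span_minimal) auto
next
  show "{v. v$3 = 0} \<subseteq> vec.span ((\<lambda>e. vector [x e, 1, 0] :: cvec) ` E)"
  proof
    fix v :: cvec assume "v \<in> {v. v$3 = 0}"
    then have "v = v$1 *s vector [x e1, 1, 0] + (v$2 - v$1) *s vector [x e0, 1, 0]"
      using assms(3,4) by (simp add: vec_eq_iff forall_3)
    moreover have "v$1 *s vector [x e1, 1, 0] + (v$2 - v$1) *s vector [x e0, 1, 0]
        \<in> vec.span ((\<lambda>e. vector [x e, 1, 0] :: cvec) ` E)"
      using assms(1,2) by (intro vec.span_add vec.span_scale vec.span_base) auto
    ultimately show "v \<in> vec.span ((\<lambda>e. vector [x e, 1, 0] :: cvec) ` E)"
      by simp
  qed
qed

lemma vector_add_scaled_e3: "vector [a, b, 0] + k *s vector [0, 0, 1] = (vector [a, b, k] :: cvec)"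
  by (simp add: vec_eq_iff forall_3)

definition collinear_on :: "('a \<Rightarrow> complex) \<Rightarrow> ('a \<Rightarrow> complex) \<Rightarrow> 'a set \<Rightarrow> bool" where
  "collinear_on x z l \<longleftrightarrow>
     (\<forall>e1\<in>l. \<forall>e2\<in>l. \<forall>e3\<in>l. (x e2 - x e1) * (z e3 - z e1) = (x e3 - x e1) * (z e2 - z e1))"

lemma collinear_triple_if_lin_dep:
  fixes x z :: "'a \<Rightarrow> complex"
  assumes dep: "lin_dep_family (\<lambda>e. vector [x e, 1, z e] :: cvec) {e1, e2, e3}"
    and distinct: "distinct [e1, e2, e3]"
  shows "(x e2 - x e1) * (z e3 - z e1) = (x e3 - x e1) * (z e2 - z e1)"
proof -
  from dep obtain c where c: "\<exists>e\<in>{e1, e2, e3}. c e \<noteq> 0"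
    "(\<Sum>e\<in>{e1, e2, e3}. c e *s (vector [x e, 1, z e] :: cvec)) = 0"
    unfolding lin_dep_family_def by blast
  then have "(c e1 *s vector [x e1, 1, z e1] + c e2 *s vector [x e2, 1, z e2]
      + c e3 *s (vector [x e3, 1, z e3] :: cvec)) $ i = 0" for i
    using distinct by (simp add: add.assoc)
  from this[of 1] this[of 2] this[of 3]
  have coordinates: "c e1 * x e1 + c e2 * x e2 + c e3 * x e3 = 0" "c e1 + c e2 + c e3 = 0"
    "c e1 * z e1 + c e2 * z e2 + c e3 * z e3 = 0"
    by simp_all
  define D where "D = (x e2 - x e1) * (z e3 - z e1) - (x e3 - x e1) * (z e2 - z e1)"
  have "c e1 * D = 0" "c e2 * D = 0" "c e3 * D = 0"
    using coordinates unfolding D_def by algebra+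
  then show ?thesis
    using c(1) by (auto simp: D_def)
qed

lemma collinear_on_if_in_circuit_variety:
  assumes "(\<lambda>e. vector [x e, 1, z e] :: cvec) \<in> circuit_variety E (paving3_dependent E Ls)"
    and "l \<in> Ls" "l \<subseteq> E"
  shows "collinear_on x z l"
  unfolding collinear_on_def
proof (intro ballI)
  fix e1 e2 e3 assume "e1 \<in> l" "e2 \<in> l" "e3 \<in> l"
  show "(x e2 - x e1) * (z e3 - z e1) = (x e3 - x e1) * (z e2 - z e1)"
  proof (cases "distinct [e1, e2, e3]")
    case True
    then have "lin_dep_family (\<lambda>e. vector [x e, 1, z e] :: cvec) {e1, e2, e3}"
      using \<open>e1 \<in> l\<close> \<open>e2 \<in> l\<close> \<open>e3 \<in> l\<close>
      by (intro circuit_variety_paving3_triple[OF assms]) auto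
    then show ?thesis
      using True by (rule collinear_triple_if_lin_dep)
  qed auto
qed

lemma affine_on_collinear:
  assumes "collinear_on x z l" "e1 \<in> l" "e2 \<in> l" "x e1 \<noteq> x e2"
    and "z e1 = \<alpha> * x e1 + \<beta>" "z e2 = \<alpha> * x e2 + \<beta>" "e \<in> l"
  shows "z e = \<alpha> * x e + \<beta>"
proof -
  have "(x e2 - x e1) * (z e - z e1) = (x e - x e1) * (z e2 - z e1)"
    using assms(1-3,7) unfolding collinear_on_def by blast
  then have "(x e2 - x e1) * (z e - (\<alpha> * x e + \<beta>)) = 0"
    unfolding assms(5,6) by algebra
  then show ?thesis
    using assms(4) by simp
qed

section \<open>The lines of \<open>L\<^sub>n\<close>\<close>

lemma pair_in_Lline: "j \<in> {1..n} \<Longrightarrow> j \<noteq> i \<Longrightarrow> {i, j} \<in> Lline n i"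
  by (auto simp: Lline_def)

lemma finite_Lline: "finite (Lline n i)"
proof -
  have "Lline n i = (\<lambda>j. {i, j}) ` ({1..n} - {i})"
    by (auto simp: Lline_def)
  then show ?thesis
    by simp
qed

lemma Lline_inter:
  assumes "i \<noteq> j" "i \<in> {1..n}" "j \<in> {1..n}"
  shows "Lline n i \<inter> Lline n j = {{i, j}}"
  using assms by (auto simp: Lline_def doubleton_eq_iff insert_commute)

lemma Lline_minus_others:
  assumes "i \<in> I" "I \<subseteq> {1..n}"
  shows "Lline n i - \<Union>(Lline n ` (I - {i})) = (\<lambda>j. {i, j}) ` ({1..n} - I)"
  using assms by (auto simp: Lline_def doubleton_eq_iff insert_commute)

lemma card_Lline_minus_others:
  assumes "i \<in> I" "I \<subseteq> {1..n}"
  shows "card (Lline n i - \<Union>(Lline n ` (I - {i}))) = n - card I"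
proof -
  have "inj_on (\<lambda>j. {i, j}) ({1..n} - I)"
    using assms(1) by (auto simp: inj_on_def doubleton_eq_iff)
  then show ?thesis
    using assms by (simp add: Lline_minus_others card_image card_Diff_subset finite_subset)
qed

lemma inj_on_Lline:
  assumes "3 \<le> n"
  shows "inj_on (Lline n) {1..n}"
proof (rule inj_onI, rule ccontr)
  fix i j assume ij: "i \<in> {1..n}" "j \<in> {1..n}" "Lline n i = Lline n j" "i \<noteq> j"
  then have "Lline n i = {{i, j}}"
    using Lline_inter[of i j n] by simp
  moreover have "card (Lline n i) = n - 1"
    using card_Lline_minus_others[of i "{i}" n] ij(1) by simp
  ultimately show False
    using assms by simp
qed

lemma Lline_subset_Union_iff:
  assumes "m \<in> {1..n}" "m \<notin> I" "I \<subseteq> {1..n}"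
  shows "Lline n m \<subseteq> \<Union>(Lline n ` I) \<longleftrightarrow> {1..n} - {m} \<subseteq> I"
proof -
  have "Lline n m - \<Union>(Lline n ` I) = (\<lambda>j. {m, j}) ` ({1..n} - insert m I)"
    using Lline_minus_others[of m "insert m I" n] assms by simp
  then have "Lline n m \<subseteq> \<Union>(Lline n ` I) \<longleftrightarrow> {1..n} - insert m I = {}"
    by (metis Diff_eq_empty_iff image_is_empty)
  then show ?thesis
    by blast
qed

lemma Lline_covered_iff:
  assumes n: "3 \<le> n" and I: "I \<subseteq> {1..n}"
  shows "(\<exists>l\<in>Llines n. l \<notin> Lline n ` I \<and> l \<subseteq> \<Union>(Lline n ` I)) \<longleftrightarrow> card I = n - 1"
proof
  assume "\<exists>l\<in>Llines n. l \<notin> Lline n ` I \<and> l \<subseteq> \<Union>(Lline n ` I)"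
  then obtain m where "m \<in> {1..n}" "m \<notin> I" "Lline n m \<subseteq> \<Union>(Lline n ` I)"
    unfolding Llines_def by blast
  then have "I = {1..n} - {m}"
    using Lline_subset_Union_iff I by blast
  then show "card I = n - 1"
    using \<open>m \<in> {1..n}\<close> by simp
next
  assume card: "card I = n - 1"
  then have "I \<noteq> {1..n}"
    using n by auto
  then obtain m where m: "m \<in> {1..n}" "m \<notin> I"
    using I by blast
  have "I = {1..n} - {m}"
    using card I m by (intro card_subset_eq) auto
  then have "Lline n m \<subseteq> \<Union>(Lline n ` I)"
    using Lline_subset_Union_iff[OF m I] by blast
  moreover have "Lline n m \<notin> Lline n ` I"
    using inj_on_Lline[OF n] m I by (auto dest: inj_onD)
  ultimately show "\<exists>l\<in>Llines n. l \<notin> Lline n ` I \<and> l \<subseteq> \<Union>(Lline n ` I)"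
    using m unfolding Llines_def by blast
qed

section \<open>Liftability of the blocks\<close>

text \<open>
  On each of the lines \<open>a, b, c, d\<close> the three points \<open>{a, b}, \<dots>, {c, d}\<close> get distinct
  abscissae, chosen so that the collinearity conditions on these lines have only affine
  solutions (\<open>k4_heights_affine\<close>). Every other point gets \<open>10\<close> or \<open>11\<close>, so that any further line
  \<open>i\<close> meets the lines \<open>a\<close> and \<open>b\<close> at different abscissae.
\<close>

definition k4_abscissa :: "nat \<Rightarrow> nat \<Rightarrow> nat \<Rightarrow> nat \<Rightarrow> nat set \<Rightarrow> complex" where
  "k4_abscissa a b c d e =
     (if e = {a, b} then 0 else if e = {a, c} then 1 else if e = {a, d} then 2
      else if e = {b, c} then 3 else if e = {b, d} then 4 else if e = {c, d} then 6
      else if a \<in> e then 10 else 11)"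

lemma k4_abscissa_simps:
  assumes "distinct [a, b, c, d]"
  shows "k4_abscissa a b c d {a, b} = 0" "k4_abscissa a b c d {a, c} = 1"
    "k4_abscissa a b c d {a, d} = 2" "k4_abscissa a b c d {b, c} = 3"
    "k4_abscissa a b c d {b, d} = 4" "k4_abscissa a b c d {c, d} = 6"
    and "i \<notin> {a, b, c, d} \<Longrightarrow> k4_abscissa a b c d {i, a} = 10"
    and "i \<notin> {a, b, c, d} \<Longrightarrow> k4_abscissa a b c d {i, b} = 11"
  using assms by (auto simp: k4_abscissa_def doubleton_eq_iff)

lemma k4_heights_affine:
  assumes abcd: "{a, b, c, d} \<subseteq> {1..n}" "distinct [a, b, c, d]"
    and collinear: "\<And>t. t \<in> {a, b, c, d} \<Longrightarrow> collinear_on (k4_abscissa a b c d) z (Lline n t)"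
  shows "\<forall>e\<in>{{a, b}, {a, c}, {a, d}, {b, c}, {b, d}, {c, d}}.
           z e = (z {a, c} - z {a, b}) * k4_abscissa a b c d e + z {a, b}"
proof -
  note x = k4_abscissa_simps[OF abcd(2)]
  have on_line: "{t, s} \<in> Lline n t" "{s, t} \<in> Lline n t" if "s \<in> {a, b, c, d}" "s \<noteq> t" for s t
    using that abcd(1) pair_in_Lline[of s n t] by (auto simp: insert_commute)
  have "(1 - 0) * (z {a, d} - z {a, b}) = (2 - 0) * (z {a, c} - z {a, b})"
    using collinear[of a, unfolded collinear_on_def, rule_format, of "{a, b}" "{a, c}" "{a, d}"]
      on_line abcd(2) by (simp add: x)
  moreover have "(3 - 0) * (z {b, d} - z {a, b}) = (4 - 0) * (z {b, c} - z {a, b})"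
    using collinear[of b, unfolded collinear_on_def, rule_format, of "{a, b}" "{b, c}" "{b, d}"]
      on_line abcd(2) by (simp add: x)
  moreover have "(3 - 1) * (z {c, d} - z {a, c}) = (6 - 1) * (z {b, c} - z {a, c})"
    using collinear[of c, unfolded collinear_on_def, rule_format, of "{a, c}" "{b, c}" "{c, d}"]
      on_line abcd(2) by (simp add: x)
  moreover have "(4 - 2) * (z {c, d} - z {a, d}) = (6 - 2) * (z {b, d} - z {a, d})"
    using collinear[of d, unfolded collinear_on_def, rule_format, of "{a, d}" "{b, d}" "{c, d}"]
      on_line abcd(2) by (simp add: x)
  ultimately have "z {a, d} = (z {a, c} - z {a, b}) * 2 + z {a, b}"
    "z {b, c} = (z {a, c} - z {a, b}) * 3 + z {a, b}"
    "z {b, d} = (z {a, c} - z {a, b}) * 4 + z {a, b}"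
    "z {c, d} = (z {a, c} - z {a, b}) * 6 + z {a, b}"
    by algebra+
  then show ?thesis
    by (simp add: x)
qed

lemma k4_lines_heights_affine:
  assumes abcd: "{a, b, c, d} \<subseteq> {1..n}" "distinct [a, b, c, d]"
    and collinear: "\<And>t. t \<in> {a, b, c, d} \<Longrightarrow> collinear_on (k4_abscissa a b c d) z (Lline n t)"
    and e: "t \<in> {a, b, c, d}" "e \<in> Lline n t"
  shows "z e = (z {a, c} - z {a, b}) * k4_abscissa a b c d e + z {a, b}"
proof -
  note x = k4_abscissa_simps[OF abcd(2)]
  have on_line: "{t, s} \<in> Lline n t" "{s, t} \<in> Lline n t" if "s \<in> {a, b, c, d}" "s \<noteq> t" for s t
    using that abcd(1) pair_in_Lline[of s n t] by (auto simp: insert_commute)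
  have k4: "\<forall>e\<in>{{a, b}, {a, c}, {a, d}, {b, c}, {b, d}, {c, d}}.
      z e = (z {a, c} - z {a, b}) * k4_abscissa a b c d e + z {a, b}"
    by (rule k4_heights_affine[OF abcd collinear])
  consider "t = a" | "t = b" | "t = c" | "t = d"
    using e(1) by blast
  then show ?thesis
  proof cases
    case 1
    show ?thesis
      by (rule affine_on_collinear[OF collinear[of a] on_line(1)[of b a] on_line(1)[of c a]])
        (use 1 e abcd(2) x k4 in auto)
  next
    case 2
    show ?thesis
      by (rule affine_on_collinear[OF collinear[of b] on_line(2)[of a b] on_line(1)[of c b]])
        (use 2 e abcd(2) x k4 in auto)
  next
    case 3
    show ?thesis
      by (rule affine_on_collinear[OF collinear[of c] on_line(2)[of a c] on_line(2)[of b c]])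
        (use 3 e abcd(2) x k4 in auto)
  next
    case 4
    show ?thesis
      by (rule affine_on_collinear[OF collinear[of d] on_line(2)[of a d] on_line(2)[of b d]])
        (use 4 e abcd(2) x k4 in auto)
  qed
qed

lemma Lline_heights_affine:
  assumes I: "I \<subseteq> {1..n}" "{a, b, c, d} \<subseteq> I" and abcd: "distinct [a, b, c, d]"
    and collinear: "\<And>t. t \<in> I \<Longrightarrow> collinear_on (k4_abscissa a b c d) z (Lline n t)"
  shows "\<forall>e\<in>\<Union>(Lline n ` I). z e = (z {a, c} - z {a, b}) * k4_abscissa a b c d e + z {a, b}"
proof
  have "{a, b, c, d} \<subseteq> {1..n}"
    using I by blast
  note k4_lines = k4_lines_heights_affine[OF this abcd collinear, OF subsetD[OF I(2)]]
  fix e assume "e \<in> \<Union>(Lline n ` I)"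
  then obtain t where t: "t \<in> I" "e \<in> Lline n t"
    by blast
  show "z e = (z {a, c} - z {a, b}) * k4_abscissa a b c d e + z {a, b}"
  proof (cases "t \<in> {a, b, c, d}")
    case False
    have on_line: "{t, s} \<in> Lline n t" "{t, s} \<in> Lline n s" if "s \<in> {a, b, c, d}" for s
      using that t(1) I False pair_in_Lline[of s n t] pair_in_Lline[of t n s]
      by (auto simp: insert_commute)
    have affine: "z {t, a} = (z {a, c} - z {a, b}) * k4_abscissa a b c d {t, a} + z {a, b}"
      "z {t, b} = (z {a, c} - z {a, b}) * k4_abscissa a b c d {t, b} + z {a, b}"
      using on_line(2)[of a] on_line(2)[of b] by (auto intro: k4_lines)
    show ?thesis
      by (rule affine_on_collinear[OF collinear[OF t(1)] on_line(1)[of a] on_line(1)[of b] _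
            affine t(2)])
        (use False abcd in \<open>auto simp: k4_abscissa_simps\<close>)
  qed (use k4_lines I t in blast)
qed

lemma not_liftable_Llines:
  assumes I: "I \<subseteq> {1..n}" "4 \<le> card I"
  shows "\<not> liftable (LnQ_ground (Lline n ` I)) (LnQ_dependent (Lline n ` I))"
proof
  assume lift: "liftable (LnQ_ground (Lline n ` I)) (LnQ_dependent (Lline n ` I))"
  obtain T where T: "T \<subseteq> I" "card T = 4"
    by (rule obtain_subset_with_card_n[OF I(2)])
  then have "\<exists>a b c d. T = {a, b, c, d} \<and> distinct [a, b, c, d]"
    by (simp add: card_Suc_eq numeral_eq_Suc) fastforce
  then obtain a b c d where abcd: "{a, b, c, d} \<subseteq> I" "distinct [a, b, c, d]"
    using T(1) by blast
  let ?x = "k4_abscissa a b c d"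
  let ?E = "\<Union>(Lline n ` I)"
  have "{a, b} \<in> Lline n a" "{a, c} \<in> Lline n a"
    using abcd I(1) by (auto intro!: pair_in_Lline)
  then have "{a, b} \<in> ?E" "{a, c} \<in> ?E"
    using abcd by auto
  then have "vec.span ((\<lambda>e. vector [?x e, 1, 0] :: cvec) ` ?E) = {v. v$3 = 0}"
    by (rule span_horizontal_points) (simp_all add: k4_abscissa_simps[OF abcd(2)])
  moreover have "is_plane {v :: cvec. v$3 = 0}"
    using is_plane_graph[of 0 0] by simp
  ultimately have "nonplanar_lift (Lline n ` I) (\<lambda>e. vector [?x e, 1, 0]) (vector [0, 0, 1])"
    using lift unfolding LnQ_ground_def LnQ_dependent_def liftable_paving3_iff by simp
  then obtain z where in_variety:
      "(\<lambda>e. vector [?x e, 1, z e] :: cvec) \<in> circuit_variety ?E (paving3_dependent ?E (Lline n ` I))"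
    and nonplanar: "\<not> (\<exists>H. is_plane H \<and> (\<lambda>e. vector [?x e, 1, z e] :: cvec) ` ?E \<subseteq> H)"
    unfolding nonplanar_lift_def vector_add_scaled_e3 by blast
  have "collinear_on ?x z (Lline n t)" if "t \<in> I" for t
    using collinear_on_if_in_circuit_variety[OF in_variety] that by auto
  then have "(\<lambda>e. vector [?x e, 1, z e] :: cvec) ` ?E
      \<subseteq> {v. v$3 = (z {a, c} - z {a, b}) * v$1 + z {a, b} * v$2}"
    using Lline_heights_affine[OF I(1) abcd] by auto
  then show False
    using nonplanar is_plane_graph by blast
qed

lemma liftable_two_Llines:
  assumes n: "4 \<le> n" and ab: "{a, b} \<subseteq> {1..n}" "a \<noteq> b"
  shows "liftable (LnQ_ground (Lline n ` {a, b})) (LnQ_dependent (Lline n ` {a, b}))"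
proof -
  have "card (Lline n a - Lline n b) = n - 2" "card (Lline n b - Lline n a) = n - 2"
    using card_Lline_minus_others[of a "{a, b}" n] card_Lline_minus_others[of b "{a, b}" n] ab
    by (simp_all add: insert_Diff_if)
  moreover have "Lline n a \<inter> Lline n b = {{a, b}}"
    using Lline_inter ab by auto
  ultimately show ?thesis
    using liftable_two_lines[of "Lline n a" "Lline n b"] n
    by (simp add: LnQ_ground_def LnQ_dependent_def finite_Lline)
qed

lemma liftable_three_Llines:
  assumes n: "5 \<le> n" and abc: "{a, b, c} \<subseteq> {1..n}" "distinct [a, b, c]"
  shows "liftable (LnQ_ground (Lline n ` {a, b, c})) (LnQ_dependent (Lline n ` {a, b, c}))"
proof -
  have "card (Lline n a - (Lline n b \<union> Lline n c)) = n - 3"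
    "card (Lline n b - (Lline n a \<union> Lline n c)) = n - 3"
    "card (Lline n c - (Lline n a \<union> Lline n b)) = n - 3"
    using card_Lline_minus_others[of a "{a, b, c}" n] card_Lline_minus_others[of b "{a, b, c}" n]
      card_Lline_minus_others[of c "{a, b, c}" n] abc
    by (simp_all add: insert_Diff_if insert_commute)
  moreover have "Lline n a \<inter> Lline n b = {{a, b}}" "Lline n a \<inter> Lline n c = {{a, c}}"
    "Lline n b \<inter> Lline n c = {{b, c}}"
    using Lline_inter abc by auto
  moreover have "{b, c} \<notin> Lline n a"
    using abc by (auto simp: Lline_def doubleton_eq_iff)
  ultimately show ?thesis
    using liftable_triangle[of "Lline n a" "Lline n b" "Lline n c"] n
    by (simp add: LnQ_ground_def LnQ_dependent_def finite_Lline Un_assoc)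
qed

lemma nice_block_iff:
  assumes n: "4 \<le> n" and Q: "Q \<subseteq> Llines n"
  shows "((2 \<le> card Q \<longrightarrow> \<not> liftable (LnQ_ground Q) (LnQ_dependent Q)) \<and>
           \<not> (\<exists>l\<in>Llines n. l \<notin> Q \<and> l \<subseteq> \<Union>Q))
         \<longleftrightarrow> card Q \<notin> {2, 3, n - 1}"
proof -
  obtain I where I: "I \<subseteq> {1..n}" "Q = Lline n ` I"
    using Q unfolding Llines_def subset_image_iff by blast
  have card: "card Q = card I"
    using I inj_on_Lline[of n] n by (simp add: card_image inj_on_subset)
  have covered: "(\<exists>l\<in>Llines n. l \<notin> Q \<and> l \<subseteq> \<Union>Q) \<longleftrightarrow> card I = n - 1"
    using Lline_covered_iff[of n I] I n by simp
  \<comment> \<open>For \<open>n = 4\<close> a block of three lines violates (ii), liftable or not.\<close>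
  consider "card I \<le> 1" | "card I = 2" | "card I = 3" "n = 4" | "card I = 3" "5 \<le> n"
    | "4 \<le> card I"
    using n by linarith
  then show ?thesis
  proof cases
    case 2
    then obtain a b where "I = {a, b}" "a \<noteq> b"
      by (meson card_2_iff)
    then show ?thesis
      using liftable_two_Llines[of n a b] I card n by auto
  next
    case 4
    then obtain a b c where "I = {a, b, c}" "distinct [a, b, c]"
      by (auto simp: card_3_iff)
    then show ?thesis
      using liftable_three_Llines[of n a b c] 4(2) I card by auto
  next
    case 5
    then show ?thesis
      using not_liftable_Llines[OF I(1)] I card covered by auto
  qed (use card covered n in auto)
qed

theorem lemma6p4:
  fixes n :: nat and \<Q> :: "nat set set set set"
  assumes "n \<ge> 4"
    and "partition_on (Llines n) \<Q>"
  shows "nice n \<Q> \<longleftrightarrow> (\<forall>Q\<in>\<Q>. card Q \<notin> {2, 3, n - 1})"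
proof -
  have blocks: "Q \<subseteq> Llines n" if "Q \<in> \<Q>" for Q
    using assms(2) that unfolding partition_on_def by blast
  have "nice n \<Q> \<longleftrightarrow> (\<forall>Q\<in>\<Q>. (2 \<le> card Q \<longrightarrow> \<not> liftable (LnQ_ground Q) (LnQ_dependent Q)) \<and>
      \<not> (\<exists>l\<in>Llines n. l \<notin> Q \<and> l \<subseteq> \<Union>Q))"
    unfolding nice_def by auto
  also have "\<dots> \<longleftrightarrow> (\<forall>Q\<in>\<Q>. card Q \<notin> {2, 3, n - 1})"
    by (rule ball_cong[OF refl], rule nice_block_iff[OF assms(1) blocks])
  finally show ?thesis .
qed

end
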